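(* Suppose the bounded functions $r$ and $c$ are $L_r$- and $L_c$-Lipschitz continuous, respectively, and that $f(x,u,d)$ is $L_f$-Lipschitz continuous in $x$ for all $u\in\mathcal{U}$, $d\in\mathcal{D}$. Let $L=\max(L_r,L_c)$ and $\gamma\in[0,1)$. If $L_f\gamma<1$, then the value function $V$ defined in the context is $L$-Lipschitz continuous.
   Context: Setting: States $x\in\mathbb{R}^n$; compact sets $\mathcal{U}\subseteq\mathbb{R}^m$ (controls) and $\mathcal{D}\subseteq\mathbb{R}^\ell$ (disturbances); dynamics $f:\mathbb{R}^n\times\mathcal{U}\times\mathcal{D}\to\mathbb{R}^n$. For sequences $\mathbf{u}=\{u_t\}_{t\ge0}\subset\mathcal{U}$, $\mathbf{d}=\{d_t\}_{t\ge0}\subset\mathcal{D}$, the trajectory is $\xi_x^{\mathbf{u},\mathbf{d}}(0)=x$, $\xi_x^{\mathbf{u},\mathbf{d}}(t+1)=f(\xi_x^{\mathbf{u},\mathbf{d}}(t),u_t,d_t)$ for $t\in\mathbb{Z}_+$. $r,c:\mathbb{R}^n\to\mathbb{R}$ are bounded. A map $\phi$ from control sequences to disturbance sequences is a non-anticipative strategy if whenever $u_t=\bar u_t$ for all $t\in\{0,\dots,T\}$, then $\phi(\mathbf{u})_t=\phi(\bar{\mathbf{u}})_t$ for all $t\in\{0,\dots,T\}$; $\Phi$ is the set of all such strategies. Value function: $$V(x)=\inf_{\phi\in\Phi}\ \sup_{\mathbf{u}}\ \sup_{t\in\mathbb{Z}_+}\ \min\Big\{\gamma^t r\big(\xi_x^{\mathbf{u},\phi(\mathbf{u})}(t)\big),\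 \min_{\tau=0,\dots,t}\gamma^\tau c\big(\xi_x^{\mathbf{u},\phi(\mathbf{u})}(\tau)\big)\Big\}$$ (the paper writes $\max_{\mathbf{u}}$ over control sequences). *)

theory Defs
  imports "HOL-Analysis.Analysis"
begin

primrec traj :: "('x \<Rightarrow> 'u \<Rightarrow> 'd \<Rightarrow> 'x) \<Rightarrow> 'x \<Rightarrow> (nat \<Rightarrow> 'u) \<Rightarrow> (nat \<Rightarrow> 'd) \<Rightarrow> nat \<Rightarrow> 'x"
  where
    "traj f x u d 0 = x"
  | "traj f x u d (Suc t) = f (traj f x u d t) (u t) (d t)"

definition seqs :: "'a set \<Rightarrow> (nat \<Rightarrow> 'a) set" where
  "seqs A = {s. \<forall>t. s t \<in> A}"

definition nonanticipative :: "'u set \<Rightarrow> 'd set \<Rightarrow> ((nat \<Rightarrow> 'u) \<Rightarrow> (nat \<Rightarrow> 'd)) set" where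
  "nonanticipative U D =
     {\<phi>. (\<forall>u\<in>seqs U. \<phi> u \<in> seqs D) \<and>
          (\<forall>u\<in>seqs U. \<forall>u'\<in>seqs U. \<forall>T::nat.
              (\<forall>t\<le>T. u t = u' t) \<longrightarrow> (\<forall>t\<le>T. \<phi> u t = \<phi> u' t))}"

definition value_fun ::
  "('x \<Rightarrow> 'u \<Rightarrow> 'd \<Rightarrow> 'x) \<Rightarrow> 'u set \<Rightarrow> 'd set \<Rightarrow> ('x \<Rightarrow> real) \<Rightarrow> ('x \<Rightarrow> real) \<Rightarrow> real \<Rightarrow> 'x \<Rightarrow> real"
  where
  "value_fun f U D r c \<gamma> x =
     (INF \<phi>\<in>nonanticipative U D. SUP u\<in>seqs U. SUP t\<in>(UNIV::nat set).
        min (\<gamma> ^ t * r (traj f x u (\<phi> u) t))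
            (MIN \<tau>\<in>{0..t}. \<gamma> ^ \<tau> * c (traj f x u (\<phi> u) \<tau>)))"

end

theory Submission
  imports Defs
begin

text \<open>Two trajectories started at x and y and driven by the same controls and disturbances
  separate by at most L_f^t |x - y| after t steps, and the discount factor \<gamma>^t absorbs this
  growth because L_f \<gamma> \<le> 1. Hence, for every strategy, control sequence and time, the
  reach-avoid payoffs at x and y differ by at most L |x - y|, and taking finite minima,
  suprema and infima of uniformly bounded families does not increase uniform distances.\<close>

lemma abs_cSUP_diff_le:
  fixes f g :: "'a \<Rightarrow> real"
  assumes "bdd_above (f ` A)" "bdd_above (g ` A)"
    and "\<And>a. a \<in> A \<Longrightarrow> \<bar>f a - g a\<bar> \<le> K" "0 \<le> K"
  shows "\<bar>(SUP a\<in>A. f a) - (SUP a\<in>A. g a)\<bar> \<le> K"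
proof (cases "A = {}")
  case False
  have "(SUP a\<in>A. f a) \<le> (SUP a\<in>A. g a) + K"
  proof (rule cSUP_least[OF False])
    fix a assume "a \<in> A"
    then show "f a \<le> (SUP a\<in>A. g a) + K"
      using cSUP_upper[OF _ assms(2)] abs_le_D1[OF assms(3)] by fastforce
  qed
  moreover have "(SUP a\<in>A. g a) \<le> (SUP a\<in>A. f a) + K"
  proof (rule cSUP_least[OF False])
    fix a assume "a \<in> A"
    then show "g a \<le> (SUP a\<in>A. f a) + K"
      using cSUP_upper[OF _ assms(1)] abs_le_D2[OF assms(3)] by fastforce
  qed
  ultimately show ?thesis by linarith
qed (simp add: assms)

lemma abs_cINF_diff_le:
  fixes f g :: "'a \<Rightarrow> real"
  assumes "bdd_below (f ` A)" "bdd_below (g ` A)"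
    and "\<And>a. a \<in> A \<Longrightarrow> \<bar>f a - g a\<bar> \<le> K" "0 \<le> K"
  shows "\<bar>(INF a\<in>A. f a) - (INF a\<in>A. g a)\<bar> \<le> K"
proof -
  have "\<bar>(SUP a\<in>A. - f a) - (SUP a\<in>A. - g a)\<bar> \<le> K"
    using assms by (intro abs_cSUP_diff_le) (auto simp: image_image[symmetric] abs_minus_commute)
  then show ?thesis by (simp add: Inf_real_def image_image)
qed

lemma abs_cSUP_le:
  fixes f :: "'a \<Rightarrow> real"
  assumes "A \<noteq> {}" "\<And>a. a \<in> A \<Longrightarrow> \<bar>f a\<bar> \<le> B"
  shows "\<bar>SUP a\<in>A. f a\<bar> \<le> B"
proof -
  have upper: "f a \<le> B" if "a \<in> A" for a
    using assms(2)[OF that] by (rule abs_le_D1)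
  obtain a where a: "a \<in> A" using assms(1) by blast
  have "bdd_above (f ` A)" using upper by (rule bdd_aboveI2)
  then have "f a \<le> (SUP a\<in>A. f a)" by (rule cSUP_upper[OF a])
  moreover have "(SUP a\<in>A. f a) \<le> B" using assms(1) upper by (rule cSUP_least)
  ultimately show ?thesis using abs_le_D2[OF assms(2)[OF a]] by (simp add: abs_le_iff)
qed

lemma abs_Min_diff_le:
  fixes f g :: "'a \<Rightarrow> real"
  assumes "finite A" "A \<noteq> {}" "\<And>a. a \<in> A \<Longrightarrow> \<bar>f a - g a\<bar> \<le> K"
  shows "\<bar>(MIN a\<in>A. f a) - (MIN a\<in>A. g a)\<bar> \<le> K"
proof -
  have "(MIN a\<in>A. g a) \<in> g ` A" "(MIN a\<in>A. f a) \<in> f ` A"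
    using assms(1,2) by simp_all
  then obtain a b where a: "a \<in> A" "(MIN a\<in>A. g a) = g a" and b: "b \<in> A" "(MIN a\<in>A. f a) = f b"
    by auto
  have "(MIN a\<in>A. f a) \<le> f a" "(MIN a\<in>A. g a) \<le> g b"
    using assms(1) a(1) b(1) by simp_all
  then show ?thesis using a b assms(3)[of a] assms(3)[of b] by linarith
qed

lemma abs_INF_SUP_SUP_diff_le:
  fixes g h :: "'s \<Rightarrow> 'a \<Rightarrow> 'b \<Rightarrow> real"
  assumes "\<And>s a b. \<bar>g s a b\<bar> \<le> B" "\<And>s a b. \<bar>h s a b\<bar> \<le> B"
    and "\<And>s a b. s \<in> S \<Longrightarrow> a \<in> A \<Longrightarrow> \<bar>g s a b - h s a b\<bar> \<le> K" "0 \<le> K"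
  shows "\<bar>(INF s\<in>S. SUP a\<in>A. SUP b. g s a b) - (INF s\<in>S. SUP a\<in>A. SUP b. h s a b)\<bar> \<le> K"
proof (cases "A = {}")
  case False
  have bounded: "bdd_above (range (k s a))" "bdd_above ((\<lambda>a. SUP b. k s a b) ` A)"
    "bdd_below ((\<lambda>s. SUP a\<in>A. SUP b. k s a b) ` S)"
    if k_bound: "\<And>s a b. \<bar>k s a b\<bar> \<le> B" for k :: "'s \<Rightarrow> 'a \<Rightarrow> 'b \<Rightarrow> real" and s a
  proof -
    have inner: "\<bar>SUP b. k s a b\<bar> \<le> B" for s a
      using k_bound by (intro abs_cSUP_le) auto
    have outer: "\<bar>SUP a\<in>A. SUP b. k s a b\<bar> \<le> B" for s
      by (rule abs_cSUP_le[OF False inner])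
    show "bdd_above (range (k s a))"
      by (rule bdd_aboveI2[where M = B]) (rule abs_le_D1[OF k_bound])
    show "bdd_above ((\<lambda>a. SUP b. k s a b) ` A)"
      by (rule bdd_aboveI2[where M = B]) (rule abs_le_D1[OF inner])
    show "bdd_below ((\<lambda>s. SUP a\<in>A. SUP b. k s a b) ` S)"
    proof (rule bdd_belowI2)
      show "- B \<le> (SUP a\<in>A. SUP b. k s a b)" for s
        using outer[of s] by (simp add: abs_le_iff)
    qed
  qed
  show ?thesis
    using assms bounded[OF assms(1)] bounded[OF assms(2)]
    by (intro abs_cINF_diff_le abs_cSUP_diff_le) auto
qed (simp add: assms)

lemma dist_traj_le:
  assumes "\<And>t. L-lipschitz_on UNIV (\<lambda>x. f x (u t) (d t))"
  shows "dist (traj f x u d t) (traj f y u d t) \<le> L ^ t * dist x y"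
proof (induction t)
  case (Suc t)
  have "0 \<le> L" using assms lipschitz_on_nonneg by blast
  have "dist (traj f x u d (Suc t)) (traj f y u d (Suc t))
      \<le> L * dist (traj f x u d t) (traj f y u d t)"
    using lipschitz_onD[OF assms] by simp
  also have "\<dots> \<le> L * (L ^ t * dist x y)"
    using Suc \<open>0 \<le> L\<close> by (rule mult_left_mono)
  finally show ?case by simp
qed simp

lemma abs_discounted_traj_diff_le:
  fixes h :: "'a::metric_space \<Rightarrow> real"
  assumes "\<And>t. L_f-lipschitz_on UNIV (\<lambda>x. f x (u t) (d t))"
    and "L-lipschitz_on UNIV h" and "0 \<le> \<gamma>" and "L_f * \<gamma> \<le> 1"
  shows "\<bar>\<gamma> ^ t * h (traj f x u d t) - \<gamma> ^ t * h (traj f y u d t)\<bar> \<le> L * dist x y"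
proof -
  have "0 \<le> L_f" "0 \<le> L" using assms(1,2) lipschitz_on_nonneg by blast+
  have "\<bar>\<gamma> ^ t * h (traj f x u d t) - \<gamma> ^ t * h (traj f y u d t)\<bar>
      = \<gamma> ^ t * dist (h (traj f x u d t)) (h (traj f y u d t))"
    using assms(3) by (simp add: dist_real_def abs_mult flip: right_diff_distrib)
  also have "\<dots> \<le> \<gamma> ^ t * (L * dist (traj f x u d t) (traj f y u d t))"
    using assms(2,3) by (simp add: lipschitz_onD mult_left_mono)
  also have "\<dots> \<le> \<gamma> ^ t * (L * (L_f ^ t * dist x y))"
    using dist_traj_le[where f = f and u = u and d = d, OF assms(1)] assms(3) \<open>0 \<le> L\<close>
    by (simp add: mult_left_mono)
  also have "\<dots> = (L_f * \<gamma>) ^ t * (L * dist x y)"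
    by (simp add: power_mult_distrib)
  also have "\<dots> \<le> L * dist x y"
    using assms(3,4) \<open>0 \<le> L_f\<close> \<open>0 \<le> L\<close>
    by (intro mult_left_le_one_le power_le_one) auto
  finally show ?thesis .
qed

definition reach_avoid_payoff ::
  "('x \<Rightarrow> 'u \<Rightarrow> 'd \<Rightarrow> 'x) \<Rightarrow> ('x \<Rightarrow> real) \<Rightarrow> ('x \<Rightarrow> real) \<Rightarrow> real \<Rightarrow>
    'x \<Rightarrow> (nat \<Rightarrow> 'u) \<Rightarrow> (nat \<Rightarrow> 'd) \<Rightarrow> nat \<Rightarrow> real"
  where
  "reach_avoid_payoff f r c \<gamma> x u d t =
     min (\<gamma> ^ t * r (traj f x u d t)) (MIN \<tau>\<in>{0..t}. \<gamma> ^ \<tau> * c (traj f x u d \<tau>))"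

lemma value_fun_eq_INF_SUP_payoff:
  "value_fun f U D r c \<gamma> x =
     (INF \<phi>\<in>nonanticipative U D. SUP u\<in>seqs U. SUP t. reach_avoid_payoff f r c \<gamma> x u (\<phi> u) t)"
  by (simp add: value_fun_def reach_avoid_payoff_def)

lemma abs_reach_avoid_payoff_le:
  assumes "\<And>x. \<bar>r x\<bar> \<le> B" "\<And>x. \<bar>c x\<bar> \<le> B" "0 \<le> \<gamma>" "\<gamma> \<le> 1"
  shows "\<bar>reach_avoid_payoff f r c \<gamma> x u d t\<bar> \<le> B"
proof -
  have discounted: "\<bar>\<gamma> ^ n * v\<bar> \<le> B" if "\<bar>v\<bar> \<le> B" for n v
  proof -
    have "\<gamma> ^ n * \<bar>v\<bar> \<le> \<bar>v\<bar>"
      using assms(3,4) by (intro mult_left_le_one_le power_le_one) auto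
    then show ?thesis using that assms(3) by (simp add: abs_mult)
  qed
  have "(MIN \<tau>\<in>{0..t}. \<gamma> ^ \<tau> * c (traj f x u d \<tau>)) \<in> (\<lambda>\<tau>. \<gamma> ^ \<tau> * c (traj f x u d \<tau>)) ` {0..t}"
    by (intro Min_in) auto
  then obtain \<tau> where "(MIN \<tau>\<in>{0..t}. \<gamma> ^ \<tau> * c (traj f x u d \<tau>)) = \<gamma> ^ \<tau> * c (traj f x u d \<tau>)"
    by blast
  then show ?thesis
    using discounted[OF assms(1)[of "traj f x u d t"]] discounted[OF assms(2)[of "traj f x u d \<tau>"]]
    by (auto simp: reach_avoid_payoff_def abs_le_iff min_def)
qed

lemma abs_reach_avoid_payoff_diff_le:
  assumes "\<And>t. L_f-lipschitz_on UNIV (\<lambda>x. f x (u t) (d t))"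
    and "L-lipschitz_on UNIV r" "L-lipschitz_on UNIV c" "0 \<le> \<gamma>" "L_f * \<gamma> \<le> 1"
  shows "\<bar>reach_avoid_payoff f r c \<gamma> x u d t - reach_avoid_payoff f r c \<gamma> y u d t\<bar> \<le> L * dist x y"
proof -
  have "\<bar>(MIN \<tau>\<in>{0..t}. \<gamma> ^ \<tau> * c (traj f x u d \<tau>)) - (MIN \<tau>\<in>{0..t}. \<gamma> ^ \<tau> * c (traj f y u d \<tau>))\<bar>
      \<le> L * dist x y"
    using abs_discounted_traj_diff_le[of L_f f u d, OF assms(1,3-5)] by (intro abs_Min_diff_le) auto
  moreover have "\<bar>\<gamma> ^ t * r (traj f x u d t) - \<gamma> ^ t * r (traj f y u d t)\<bar> \<le> L * dist x y"
    using abs_discounted_traj_diff_le[of L_f f u d, OF assms(1,2,4,5)] .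
  ultimately show ?thesis unfolding reach_avoid_payoff_def by linarith
qed

theorem theorem3:
  fixes f :: "'n::euclidean_space \<Rightarrow> 'm::euclidean_space \<Rightarrow> 'l::euclidean_space \<Rightarrow> 'n"
    and U :: "'m set" and D :: "'l set"
    and r c :: "'n \<Rightarrow> real"
    and L_r L_c L_f \<gamma> :: real
  assumes "compact U" and "compact D"
    and "bounded (range r)" and "bounded (range c)"
    and "L_r-lipschitz_on UNIV r" and "L_c-lipschitz_on UNIV c"
    and "\<forall>u\<in>U. \<forall>d\<in>D. L_f-lipschitz_on UNIV (\<lambda>x. f x u d)"
    and "0 \<le> \<gamma>" and "\<gamma> < 1"
    and "L_f * \<gamma> < 1"
  shows "(max L_r L_c)-lipschitz_on UNIV (value_fun f U D r c \<gamma>)"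
proof (rule lipschitz_onI)
  let ?L = "max L_r L_c"
  show "0 \<le> ?L" using assms(5) lipschitz_on_nonneg by fastforce
  have r: "?L-lipschitz_on UNIV r" and c: "?L-lipschitz_on UNIV c"
    using assms(5,6) by (auto intro: lipschitz_on_le)
  obtain B_r B_c where "\<And>x. \<bar>r x\<bar> \<le> B_r" "\<And>x. \<bar>c x\<bar> \<le> B_c"
    using assms(3,4) by (auto simp: bounded_iff)
  then have B: "\<bar>r x\<bar> \<le> max B_r B_c" "\<bar>c x\<bar> \<le> max B_r B_c" for x
    by (meson max.coboundedI1 max.coboundedI2)+
  have f: "L_f-lipschitz_on UNIV (\<lambda>x. f x (u t) (\<phi> u t))"
    if "\<phi> \<in> nonanticipative U D" "u \<in> seqs U" for \<phi> u t
    using that assms(7) by (auto simp: nonanticipative_def seqs_def)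
  have bound: "\<bar>reach_avoid_payoff f r c \<gamma> z u d t\<bar> \<le> max B_r B_c" for z u d t
    using B assms(8,9) by (intro abs_reach_avoid_payoff_le) auto
  fix x y
  have "\<bar>value_fun f U D r c \<gamma> x - value_fun f U D r c \<gamma> y\<bar> \<le> ?L * dist x y"
    unfolding value_fun_eq_INF_SUP_payoff
  proof (rule abs_INF_SUP_SUP_diff_le[OF bound bound])
    show "\<bar>reach_avoid_payoff f r c \<gamma> x u (\<phi> u) t - reach_avoid_payoff f r c \<gamma> y u (\<phi> u) t\<bar>
        \<le> ?L * dist x y" if "\<phi> \<in> nonanticipative U D" "u \<in> seqs U" for \<phi> u t
      using f[OF that] r c assms(8,10) by (intro abs_reach_avoid_payoff_diff_le) auto
  qed (simp add: \<open>0 \<le> ?L\<close>)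
  then show "dist (value_fun f U D r c \<gamma> x) (value_fun f U D r c \<gamma> y) \<le> ?L * dist x y"
    by (simp add: dist_real_def)
qed

end
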